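(* Let $m\ge1$ and let $C_k$ be the $\mathbb Z_2$-vector space with basis the $k$-element subsets of $\{1,\dots,2m\}$. Define $\partial_k\colon C_k\to C_{k-2}$ on basis elements by $\partial_k(\Delta)=\sum\Gamma$, the sum over all $(k-2)$-element subsets $\Gamma\subset\Delta$. Then $$\dim_{\mathbb Z_2}\ker\partial_{m+1}=\binom{2m}{m-1}-\sum_{i=0}^{m-1}2^{m-1-i}\binom{2i}{i}.$$
   Context: $\mathbb Z_2=\mathbb Z/2\mathbb Z$; $C_k=0$ for $k<0$. *)

theory Defs
  imports Complex_Main "HOL-Library.Z2" "HOL-Library.Function_Algebras"
begin

text \<open>Chains: Z_2-valued functions on subsets of nat, supported on the
  k-element subsets of {1..2m}.  A chain f stands for the formal sum of f D * D.\<close>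

definition scaleZ2 :: "bit \<Rightarrow> (nat set \<Rightarrow> bit) \<Rightarrow> (nat set \<Rightarrow> bit)" where
  "scaleZ2 c f = (\<lambda>S. c * f S)"

definition ksubsets :: "nat \<Rightarrow> nat \<Rightarrow> nat set set" where
  "ksubsets m k = {S. S \<subseteq> {1..2*m} \<and> card S = k}"

definition chains :: "nat \<Rightarrow> nat \<Rightarrow> (nat set \<Rightarrow> bit) set" where
  "chains m k = {f. \<forall>S. f S \<noteq> 0 \<longrightarrow> S \<in> ksubsets m k}"

definition basis_el :: "nat set \<Rightarrow> (nat set \<Rightarrow> bit)" where
  "basis_el D = (\<lambda>S. if S = D then 1 else 0)"

text \<open>Boundary on a basis element (k \<ge> 2; C_(k-2) = 0 for k < 2).\<close>
definition bd_basis :: "nat \<Rightarrow> nat set \<Rightarrow> (nat set \<Rightarrow> bit)" where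
  "bd_basis k D = (if k < 2 then 0 else
     (\<Sum>G\<in>{G. G \<subseteq> D \<and> card G = k - 2}. basis_el G))"

definition bd :: "nat \<Rightarrow> nat \<Rightarrow> (nat set \<Rightarrow> bit) \<Rightarrow> (nat set \<Rightarrow> bit)" where
  "bd m k f = (\<Sum>D\<in>ksubsets m k. scaleZ2 (f D) (bd_basis k D))"

definition ker_bd :: "nat \<Rightarrow> nat \<Rightarrow> (nat set \<Rightarrow> bit) set" where
  "ker_bd m k = {f \<in> chains m k. bd m k f = 0}"

end

theory Submission
  imports Defs "HOL-Library.FuncSet"
begin

(* A k-chain is a function f from k-subsets to Z_2, and the coefficient of G in its boundary
   is the sum of f over the supersets of G with two more elements. Adjoin two points a, b to a
   ground set U and cut a chain f on U + {a, b} into the four slices f0, fa, fb, fab on subsets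
   of U (fa X = f (X + {a}), and so on). Write d and D for the sums over one-step and two-step
   supersets; over Z_2 we have d d = 0, D D = 0 and d D = D d, because the binomial coefficients
   2, 6 and 3, 3 count the intermediate sets. With these, f is a cycle iff
   fab = D f0 + d fa + d fb and both fa + d f0 and fb + d f0 are (k-1)-cycles on U, while f0 is
   arbitrary. So the k-cycles on U + {a, b} correspond to triples (k-chain, (k-1)-cycle,
   (k-1)-cycle) on U. For |U| = 2n and k = n + 2 this gives the recurrence
   r(n+1) = C(2n, n+2) + 2 r(n) for the dimension r(n) of the (n+1)-cycles on {1..2n}, whose
   solution is the stated formula. *)

definition supersets :: "'a set \<Rightarrow> nat \<Rightarrow> 'a set \<Rightarrow> 'a set set" where
  "supersets U j G = {D. G \<subseteq> D \<and> D \<subseteq> U \<and> card D = card G + j}"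

text \<open>For a k-chain f on U, upsum U 2 f G is the coefficient of G in the boundary of f.\<close>
definition upsum :: "'a set \<Rightarrow> nat \<Rightarrow> ('a set \<Rightarrow> 'b::comm_monoid_add) \<Rightarrow> 'a set \<Rightarrow> 'b" where
  "upsum U j f G = (\<Sum>D\<in>supersets U j G. f D)"

definition slice :: "'a \<Rightarrow> ('a set \<Rightarrow> 'b) \<Rightarrow> 'a set \<Rightarrow> 'b" where
  "slice a f X = f (insert a X)"

lemma finite_supersets: "finite U \<Longrightarrow> finite (supersets U j G)"
  unfolding supersets_def by (rule finite_subset[of _ "Pow U"]) auto

lemma upsum_not_subset: "\<not> G \<subseteq> U \<Longrightarrow> upsum U j f G = 0"
  unfolding upsum_def supersets_def by (metis (no_types, lifting) empty_Collect_eq subset_trans sum.empty)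

lemma upsum_cong: "(\<And>X. X \<subseteq> U \<Longrightarrow> f X = g X) \<Longrightarrow> upsum U j f = upsum U j g"
  unfolding upsum_def supersets_def by (intro ext sum.cong) auto

lemma upsum_add: "upsum U j (f + g) = upsum U j f + upsum U j g"
  unfolding upsum_def by (simp add: sum.distrib fun_eq_iff)

lemma upsum_zero [simp]: "upsum U j 0 = 0"
  unfolding upsum_def by (simp add: fun_eq_iff)

lemma upsum_nonzeroD:
  assumes "\<And>S. f S \<noteq> 0 \<Longrightarrow> card S = k" and "upsum U j f G \<noteq> 0"
  shows "card G + j = k \<and> G \<subseteq> U"
proof -
  obtain D where "D \<in> supersets U j G" "f D \<noteq> 0"
    using assms(2) unfolding upsum_def by (meson sum.not_neutral_contains_not_neutral)
  then show ?thesis using assms(1)[of D] unfolding supersets_def by auto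
qed

lemma upsum_0: "finite U \<Longrightarrow> upsum U 0 f G = (if G \<subseteq> U then f G else 0)"
proof (cases "G \<subseteq> U")
  case True
  assume "finite U"
  then have "D = G" if "G \<subseteq> D" "D \<subseteq> U" "card D = card G" for D
    using card_subset_eq[of D G] that finite_subset by metis
  then have "supersets U 0 G = {G}"
    using True unfolding supersets_def by auto
  then show ?thesis using True unfolding upsum_def by simp
qed (simp add: upsum_not_subset)

lemma card_supersets_within:
  assumes "finite D" "G \<subseteq> D"
  shows "card {H. G \<subseteq> H \<and> H \<subseteq> D \<and> card H = card G + i} = (card D - card G) choose i"
proof -
  have fG: "finite G" using assms finite_subset by blast
  have "bij_betw (\<lambda>H. H - G) {H. G \<subseteq> H \<and> H \<subseteq> D \<and> card H = card G + i} {B. B \<subseteq> D - G \<and> card B = i}"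
  proof (rule bij_betw_byWitness[where f'="\<lambda>B. B \<union> G"])
    show "(\<lambda>B. B \<union> G) ` {B. B \<subseteq> D - G \<and> card B = i} \<subseteq> {H. G \<subseteq> H \<and> H \<subseteq> D \<and> card H = card G + i}"
    proof safe
      fix B assume B: "B \<subseteq> D - G"
      then have "finite B" using assms(1) finite_subset by blast
      then show "card (B \<union> G) = card G + card B"
        using B fG by (subst card_Un_disjoint) auto
    qed (use assms in auto)
  qed (use fG in \<open>auto simp: card_Diff_subset\<close>)
  then have "card {H. G \<subseteq> H \<and> H \<subseteq> D \<and> card H = card G + i} = card (D - G) choose i"
    using assms by (simp add: bij_betw_same_card n_subsets)
  then show ?thesis using assms fG by (simp add: card_Diff_subset)
qed

text \<open>Each (i+j)-step superset D of G arises from exactly (i+j choose i) intermediate sets.\<close>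
lemma upsum_upsum:
  fixes f :: "'a set \<Rightarrow> 'b::comm_semiring_1"
  assumes "finite U"
  shows "upsum U i (upsum U j f) G = of_nat ((i + j) choose i) * upsum U (i + j) f G"
proof (cases "G \<subseteq> U")
  case False then show ?thesis by (simp add: upsum_not_subset)
next
  case True
  have eq: "supersets U j H = {D \<in> supersets U (i+j) G. H \<subseteq> D}" if "H \<in> supersets U i G" for H
    using that unfolding supersets_def by auto
  have "upsum U i (upsum U j f) G = (\<Sum>H\<in>supersets U i G. \<Sum>D\<in>{D \<in> supersets U (i+j) G. H \<subseteq> D}. f D)"
    unfolding upsum_def by (rule sum.cong) (auto simp: eq)
  also have "\<dots> = (\<Sum>D\<in>supersets U (i+j) G. \<Sum>H\<in>{H \<in> supersets U i G. H \<subseteq> D}. f D)"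
    by (rule sum.swap_restrict) (auto simp: finite_supersets assms)
  also have "\<dots> = (\<Sum>D\<in>supersets U (i+j) G. of_nat ((i + j) choose i) * f D)"
  proof (rule sum.cong[OF refl])
    fix D assume D: "D \<in> supersets U (i+j) G"
    then have "finite D" using assms unfolding supersets_def using finite_subset by blast
    moreover have "{H \<in> supersets U i G. H \<subseteq> D} = {H. G \<subseteq> H \<and> H \<subseteq> D \<and> card H = card G + i}"
      using D unfolding supersets_def by auto
    ultimately have "card {H \<in> supersets U i G. H \<subseteq> D} = (i + j) choose i"
      using D by (simp add: card_supersets_within supersets_def)
    then show "(\<Sum>H\<in>{H \<in> supersets U i G. H \<subseteq> D}. f D) = of_nat ((i + j) choose i) * f D"
      by simp
  qed
  also have "\<dots> = of_nat ((i + j) choose i) * upsum U (i + j) f G"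
    unfolding upsum_def by (simp add: sum_distrib_left)
  finally show ?thesis .
qed

lemma supersets_insert_Suc:
  assumes "finite U" "a \<notin> U" "G \<subseteq> U"
  shows "supersets (insert a U) (Suc j) G = supersets U (Suc j) G \<union> insert a ` supersets U j G"
proof (intro set_eqI iffI)
  fix D assume D: "D \<in> supersets (insert a U) (Suc j) G"
  then have fD: "finite D" using assms unfolding supersets_def using finite_subset by blast
  show "D \<in> supersets U (Suc j) G \<union> insert a ` supersets U j G"
  proof (cases "a \<in> D")
    case True
    then have "D - {a} \<in> supersets U j G" "D = insert a (D - {a})"
      using D assms fD unfolding supersets_def by auto
    then show ?thesis by blast
  qed (use D in \<open>auto simp: supersets_def\<close>)
next
  fix D assume "D \<in> supersets U (Suc j) G \<union> insert a ` supersets U j G"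
  then show "D \<in> supersets (insert a U) (Suc j) G"
  proof
    assume "D \<in> insert a ` supersets U j G"
    then obtain Y where Y: "Y \<in> supersets U j G" "D = insert a Y" by blast
    then have "finite Y" "a \<notin> Y" using assms unfolding supersets_def using finite_subset by auto
    then show ?thesis using Y unfolding supersets_def by auto
  qed (auto simp: supersets_def)
qed

lemma supersets_insert_insert:
  assumes "finite U" "a \<notin> U" "G \<subseteq> U"
  shows "supersets (insert a U) j (insert a G) = insert a ` supersets U j G"
proof (intro set_eqI iffI)
  fix D assume D: "D \<in> supersets (insert a U) j (insert a G)"
  then have "finite D" using assms unfolding supersets_def using finite_subset by blast
  have "a \<notin> G" "finite G" using assms finite_subset by auto
  then have "D - {a} \<in> supersets U j G" "D = insert a (D - {a})"
    using D assms \<open>finite D\<close> unfolding supersets_def by auto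
  then show "D \<in> insert a ` supersets U j G" by blast
next
  fix D assume "D \<in> insert a ` supersets U j G"
  then obtain Y where Y: "Y \<in> supersets U j G" "D = insert a Y" by blast
  then have "finite Y" "a \<notin> Y" using assms unfolding supersets_def using finite_subset by auto
  moreover have "finite G" "a \<notin> G" using assms finite_subset by auto
  ultimately show "D \<in> supersets (insert a U) j (insert a G)"
    using Y unfolding supersets_def by auto
qed

lemma inj_on_insert_supersets: "a \<notin> U \<Longrightarrow> inj_on (insert a) (supersets U j G)"
  unfolding supersets_def by (rule inj_onI) (metis Diff_insert_absorb mem_Collect_eq subsetD)

lemma upsum_insert_Suc:
  assumes "finite U" "a \<notin> U" "G \<subseteq> U"
  shows "upsum (insert a U) (Suc j) f G = upsum U (Suc j) f G + upsum U j (slice a f) G"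
proof -
  have "supersets U (Suc j) G \<inter> insert a ` supersets U j G = {}"
    using assms unfolding supersets_def by auto
  then have "upsum (insert a U) (Suc j) f G = upsum U (Suc j) f G + (\<Sum>D\<in>insert a ` supersets U j G. f D)"
    unfolding upsum_def supersets_insert_Suc[OF assms]
    by (intro sum.union_disjoint) (auto simp: finite_supersets assms)
  then show ?thesis
    by (simp add: upsum_def slice_def sum.reindex[OF inj_on_insert_supersets[OF assms(2)]])
qed

lemma upsum_insert_insert:
  assumes "finite U" "a \<notin> U" "G \<subseteq> U"
  shows "upsum (insert a U) j f (insert a G) = upsum U j (slice a f) G"
  by (simp add: upsum_def slice_def supersets_insert_insert[OF assms]
      sum.reindex[OF inj_on_insert_supersets[OF assms(2)]])

lemma slice_commute: "slice a (slice b f) = slice b (slice a f)"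
  by (simp add: slice_def fun_eq_iff insert_commute)

lemma upsum2_split_base:
  fixes f :: "'a set \<Rightarrow> 'b::comm_monoid_add"
  assumes "finite U" "a \<notin> U" "b \<notin> U" "a \<noteq> b" "G \<subseteq> U"
  shows "upsum (insert a (insert b U)) 2 f G =
    upsum U 2 f G + upsum U 1 (slice a f) G + upsum U 1 (slice b f) G + slice a (slice b f) G"
proof -
  have bU: "finite (insert b U)" "a \<notin> insert b U" "G \<subseteq> insert b U" using assms by auto
  show ?thesis
    using upsum_insert_Suc[OF bU, of "Suc 0" f] upsum_insert_Suc[OF assms(1,3,5), of "Suc 0" f]
      upsum_insert_Suc[OF assms(1,3,5), of 0 "slice a f"] assms
    by (simp add: upsum_0 numeral_2_eq_2 slice_commute ac_simps)
qed

lemma upsum2_split_insert: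
  fixes f :: "'a set \<Rightarrow> 'b::comm_monoid_add"
  assumes "finite U" "a \<notin> U" "b \<notin> U" "a \<noteq> b" "G \<subseteq> U"
  shows "upsum (insert a (insert b U)) 2 f (insert a G) =
    upsum U 2 (slice a f) G + upsum U 1 (slice a (slice b f)) G"
proof -
  have bU: "finite (insert b U)" "a \<notin> insert b U" "G \<subseteq> insert b U" using assms by auto
  show ?thesis
    using upsum_insert_insert[OF bU, of 2 f] upsum_insert_Suc[OF assms(1,3,5), of "Suc 0" "slice a f"]
    by (simp add: numeral_2_eq_2 slice_commute)
qed

lemma upsum2_split_insert_right:
  fixes f :: "'a set \<Rightarrow> 'b::comm_monoid_add"
  assumes "finite U" "a \<notin> U" "b \<notin> U" "a \<noteq> b" "G \<subseteq> U"
  shows "upsum (insert a (insert b U)) 2 f (insert b G) =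
    upsum U 2 (slice b f) G + upsum U 1 (slice a (slice b f)) G"
proof -
  have "upsum (insert b (insert a U)) 2 f (insert b G) =
      upsum U 2 (slice b f) G + upsum U 1 (slice b (slice a f)) G"
    by (rule upsum2_split_insert) (use assms in auto)
  then show ?thesis by (simp only: insert_commute[of b a U] slice_commute[of b a])
qed

lemma upsum2_split_insert_insert:
  fixes f :: "'a set \<Rightarrow> 'b::comm_monoid_add"
  assumes "finite U" "a \<notin> U" "b \<notin> U" "a \<noteq> b" "G \<subseteq> U"
  shows "upsum (insert a (insert b U)) 2 f (insert a (insert b G)) = upsum U 2 (slice a (slice b f)) G"
proof -
  have bU: "finite (insert b U)" "a \<notin> insert b U" "insert b G \<subseteq> insert b U" using assms by auto
  show ?thesis
    using upsum_insert_insert[OF bU, of 2 f] upsum_insert_insert[OF assms(1,3,5), of 2 "slice a f"]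
    by (simp add: slice_commute)
qed

lemma subset_insert_insert_cases:
  assumes "X \<subseteq> insert a (insert b U)"
  obtains G where "G \<subseteq> U" "X = G" | G where "G \<subseteq> U" "X = insert a G"
    | G where "G \<subseteq> U" "X = insert b G" | G where "G \<subseteq> U" "X = insert a (insert b G)"
proof -
  have G: "X - {a, b} \<subseteq> U" using assms by auto
  consider "a \<notin> X" "b \<notin> X" | "a \<in> X" "b \<notin> X" | "a \<notin> X" "b \<in> X" | "a \<in> X" "b \<in> X" by blast
  then show ?thesis
  proof cases
    case 1 then show ?thesis using that(1)[OF G] by auto
  next
    case 2 then show ?thesis using that(2)[OF G] by auto
  next
    case 3 then show ?thesis using that(3)[OF G] by auto
  next
    case 4 then show ?thesis using that(4)[OF G] by auto
  qed
qed

lemma vanishes_on_insert_insert_iff: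
  "(\<forall>X. X \<subseteq> insert a (insert b U) \<longrightarrow> g X = 0) \<longleftrightarrow>
    (\<forall>G. G \<subseteq> U \<longrightarrow> g G = 0 \<and> g (insert a G) = 0 \<and> g (insert b G) = 0 \<and> g (insert a (insert b G)) = 0)"
proof
  assume vanish: "\<forall>X. X \<subseteq> insert a (insert b U) \<longrightarrow> g X = 0"
  show "\<forall>G. G \<subseteq> U \<longrightarrow> g G = 0 \<and> g (insert a G) = 0 \<and> g (insert b G) = 0 \<and> g (insert a (insert b G)) = 0"
  proof (intro allI impI)
    fix G assume "G \<subseteq> U"
    then show "g G = 0 \<and> g (insert a G) = 0 \<and> g (insert b G) = 0 \<and> g (insert a (insert b G)) = 0"
      using vanish[rule_format, of G] vanish[rule_format, of "insert a G"]
        vanish[rule_format, of "insert b G"] vanish[rule_format, of "insert a (insert b G)"]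
      by auto
  qed
qed (auto elim!: subset_insert_insert_cases)

(* keep + and * on bit as field operations rather than rewriting them to XOR and AND *)
declare add_bit_eq_xor [simp del] mult_bit_eq_and [simp del]

lemma bit_add_self [simp]: "(x::bit) + x = 0"
  by (cases x) simp_all

lemma bit_add_eq_0_iff: "(x::bit) + y = 0 \<longleftrightarrow> x = y"
  by (cases x; cases y) simp_all

lemma bit_add_nonzero: "(x::bit) + y \<noteq> 0 \<Longrightarrow> x \<noteq> 0 \<or> y \<noteq> 0"
  by auto

lemma upsum1_upsum1:
  fixes f :: "'a set \<Rightarrow> bit"
  shows "finite U \<Longrightarrow> upsum U (Suc 0) (upsum U (Suc 0) f) = 0"
  by (rule ext) (simp add: upsum_upsum)

lemma upsum2_upsum2:
  fixes f :: "'a set \<Rightarrow> bit"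
  assumes "finite U"
  shows "upsum U 2 (upsum U 2 f) = 0"
proof -
  have "(4::nat) choose 2 = 6" by code_simp
  then show ?thesis using assms by (simp add: fun_eq_iff upsum_upsum)
qed

lemma upsum1_upsum2_commute:
  fixes f :: "'a set \<Rightarrow> bit"
  assumes "finite U"
  shows "upsum U (Suc 0) (upsum U 2 f) = upsum U 2 (upsum U (Suc 0) f)"
proof -
  have "(3::nat) choose 2 = 3" "(3::nat) choose 1 = 3" by code_simp+
  then show ?thesis
    using assms upsum_upsum[of U 1 2 f] upsum_upsum[of U 2 1 f] by (simp add: fun_eq_iff numeral_3_eq_3)
qed

lemma upsum2_eq_0_iff:
  fixes f :: "'a set \<Rightarrow> bit"
  assumes U: "finite U" "a \<notin> U" "b \<notin> U" "a \<noteq> b"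
  shows "upsum (insert a (insert b U)) 2 f = 0 \<longleftrightarrow>
    (\<forall>G. G \<subseteq> U \<longrightarrow>
        slice a (slice b f) G = upsum U 2 f G + upsum U 1 (slice a f) G + upsum U 1 (slice b f) G
      \<and> upsum U 2 (slice a f) G = upsum U 1 (slice a (slice b f)) G
      \<and> upsum U 2 (slice b f) G = upsum U 1 (slice a (slice b f)) G
      \<and> upsum U 2 (slice a (slice b f)) G = 0)"
    (is "_ \<longleftrightarrow> ?slice_equations")
proof -
  have "upsum (insert a (insert b U)) 2 f = 0 \<longleftrightarrow>
      (\<forall>X. X \<subseteq> insert a (insert b U) \<longrightarrow> upsum (insert a (insert b U)) 2 f X = 0)"
    by (auto simp: fun_eq_iff) (metis upsum_not_subset)
  also have "\<dots> \<longleftrightarrow> ?slice_equations"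
    unfolding vanishes_on_insert_insert_iff
    by (auto simp: upsum2_split_base[OF U] upsum2_split_insert[OF U] upsum2_split_insert_right[OF U]
        upsum2_split_insert_insert[OF U] bit_add_eq_0_iff)
  finally show ?thesis .
qed

definition chains_on :: "'a set \<Rightarrow> nat \<Rightarrow> ('a set \<Rightarrow> bit) set" where
  "chains_on U k = {f. \<forall>S. f S \<noteq> 0 \<longrightarrow> S \<subseteq> U \<and> card S = k}"

definition cycles_on :: "'a set \<Rightarrow> nat \<Rightarrow> ('a set \<Rightarrow> bit) set" where
  "cycles_on U k = {f \<in> chains_on U k. upsum U 2 f = 0}"

definition restrict_subsets :: "'a set \<Rightarrow> ('a set \<Rightarrow> 'b::zero) \<Rightarrow> 'a set \<Rightarrow> 'b" where
  "restrict_subsets U g X = (if X \<subseteq> U then g X else 0)"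

lemma upsum_restrict_subsets [simp]: "upsum U j (restrict_subsets U g) = upsum U j g"
  by (rule upsum_cong) (simp add: restrict_subsets_def)

lemma upsum_chain_nonzeroD: "f \<in> chains_on U k \<Longrightarrow> upsum V j f G \<noteq> 0 \<Longrightarrow> card G + j = k"
  using upsum_nonzeroD[of f k V j G] unfolding chains_on_def by blast

definition split_chain :: "'a set \<Rightarrow> 'a \<Rightarrow> 'a \<Rightarrow> ('a set \<Rightarrow> bit) \<Rightarrow>
    ('a set \<Rightarrow> bit) \<times> ('a set \<Rightarrow> bit) \<times> ('a set \<Rightarrow> bit)" where
  "split_chain U a b f =
    (restrict_subsets U f, restrict_subsets U (slice a f) + upsum U 1 f,
     restrict_subsets U (slice b f) + upsum U 1 f)"

text \<open>The inverse of split_chain on cycles; the last clause is the slice at {a, b}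
  that the cycle condition forces.\<close>
definition glue :: "'a set \<Rightarrow> 'a \<Rightarrow> 'a \<Rightarrow> ('a set \<Rightarrow> bit) \<Rightarrow> ('a set \<Rightarrow> bit) \<Rightarrow>
    ('a set \<Rightarrow> bit) \<Rightarrow> 'a set \<Rightarrow> bit" where
  "glue U a b p q r X =
    (if X \<subseteq> U then p X
     else if a \<in> X \<and> b \<notin> X \<and> X - {a} \<subseteq> U then q (X - {a}) + upsum U 1 p (X - {a})
     else if b \<in> X \<and> a \<notin> X \<and> X - {b} \<subseteq> U then r (X - {b}) + upsum U 1 p (X - {b})
     else if a \<in> X \<and> b \<in> X \<and> X - {a, b} \<subseteq> U
       then upsum U 2 p (X - {a, b}) + upsum U 1 q (X - {a, b}) + upsum U 1 r (X - {a, b})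
     else 0)"

lemma cycles_on_slices:
  assumes "finite U" "a \<notin> U" "b \<notin> U" "a \<noteq> b"
    and "f \<in> cycles_on (insert a (insert b U)) k" and "G \<subseteq> U"
  shows "slice a (slice b f) G = upsum U 2 f G + upsum U 1 (slice a f) G + upsum U 1 (slice b f) G"
    and "upsum U 2 (slice a f) G = upsum U 1 (slice a (slice b f)) G"
  using assms upsum2_eq_0_iff[of U a b f] unfolding cycles_on_def by blast+

lemma slice_plus_upsum_in_cycles:
  assumes U: "finite U" and a: "a \<notin> U" and b: "b \<notin> U" and ab: "a \<noteq> b"
    and f: "f \<in> cycles_on (insert a (insert b U)) k"
  shows "restrict_subsets U (slice a f) + upsum U 1 f \<in> cycles_on U (k - 1)"
proof -
  have chain: "f \<in> chains_on (insert a (insert b U)) k" using f unfolding cycles_on_def by blast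
  have slice_ab: "upsum U 1 (slice a (slice b f)) = upsum U 1 (upsum U 2 f)"
  proof -
    have "upsum U 1 (slice a (slice b f)) = upsum U 1 (upsum U 2 f + upsum U 1 (slice a f) + upsum U 1 (slice b f))"
      by (rule upsum_cong) (simp add: cycles_on_slices(1)[OF U a b ab f])
    then show ?thesis by (simp add: upsum_add upsum1_upsum1[OF U])
  qed
  have "restrict_subsets U (slice a f) + upsum U 1 f \<in> chains_on U (k - 1)"
    unfolding chains_on_def
  proof (intro CollectI allI impI)
    fix S assume "(restrict_subsets U (slice a f) + upsum U 1 f) S \<noteq> 0"
    then consider "S \<subseteq> U" "f (insert a S) \<noteq> 0" | "upsum U 1 f S \<noteq> 0"
      unfolding restrict_subsets_def slice_def by (fastforce split: if_splits)
    then show "S \<subseteq> U \<and> card S = k - 1"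
    proof cases
      case 1
      moreover have "finite S" "a \<notin> S" using 1 U a finite_subset by auto
      ultimately show ?thesis using chain unfolding chains_on_def by auto
    next
      case 2
      then show ?thesis using upsum_nonzeroD[of f k U 1 S] chain unfolding chains_on_def by force
    qed
  qed
  moreover have "upsum U 2 (restrict_subsets U (slice a f) + upsum U 1 f) = 0"
  proof (rule ext)
    fix G
    show "upsum U 2 (restrict_subsets U (slice a f) + upsum U 1 f) G = 0 G"
    proof (cases "G \<subseteq> U")
      case True
      then show ?thesis
        using cycles_on_slices(2)[OF U a b ab f True] slice_ab
        by (simp add: upsum_add upsum1_upsum2_commute[OF U, symmetric])
    qed (simp add: upsum_not_subset)
  qed
  ultimately show ?thesis unfolding cycles_on_def by blast
qed

context
  fixes U :: "'a set" and a b :: 'a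
  assumes U: "finite U" and a: "a \<notin> U" and b: "b \<notin> U" and ab: "a \<noteq> b"
begin

lemma glue_subset: "X \<subseteq> U \<Longrightarrow> glue U a b p q r X = p X"
  unfolding glue_def by simp

lemma slice_glue_a: "X \<subseteq> U \<Longrightarrow> slice a (glue U a b p q r) X = q X + upsum U 1 p X"
proof -
  assume X: "X \<subseteq> U"
  then have "a \<notin> X" "b \<notin> X" "insert a X - {a} = X" using a b by auto
  then show ?thesis unfolding glue_def slice_def using X a ab by auto
qed

lemma slice_glue_b: "X \<subseteq> U \<Longrightarrow> slice b (glue U a b p q r) X = r X + upsum U 1 p X"
proof -
  assume X: "X \<subseteq> U"
  then have "a \<notin> X" "b \<notin> X" "insert b X - {b} = X" using a b by auto
  then show ?thesis unfolding glue_def slice_def using X b ab by auto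
qed

lemma slice_glue_ab:
  "X \<subseteq> U \<Longrightarrow> slice a (slice b (glue U a b p q r)) X = upsum U 2 p X + upsum U 1 q X + upsum U 1 r X"
proof -
  assume X: "X \<subseteq> U"
  then have "a \<notin> X" "b \<notin> X" "insert a (insert b X) - {a, b} = X" using a b by auto
  then show ?thesis unfolding glue_def slice_def using X a b ab by auto
qed

lemma glue_outside: "\<not> X \<subseteq> insert a (insert b U) \<Longrightarrow> glue U a b p q r X = 0"
  unfolding glue_def by auto

lemma glue_in_chains_on:
  assumes k: "k \<ge> 2" and p: "p \<in> chains_on U k"
    and q: "q \<in> chains_on U (k - 1)" and r: "r \<in> chains_on U (k - 1)"
  shows "glue U a b p q r \<in> chains_on (insert a (insert b U)) k"
  unfolding chains_on_def
proof (intro CollectI allI impI)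
  let ?f = "glue U a b p q r"
  have fin: "finite G \<and> a \<notin> G \<and> b \<notin> G" if "G \<subseteq> U" for G
    using that U a b finite_subset by auto
  fix S assume ne: "?f S \<noteq> 0"
  then have "S \<subseteq> insert a (insert b U)" using glue_outside by blast
  then show "S \<subseteq> insert a (insert b U) \<and> card S = k"
  proof (cases rule: subset_insert_insert_cases)
    case (1 G) then show ?thesis using ne p by (auto simp: glue_subset chains_on_def)
  next
    case (2 G)
    then have "slice a ?f G \<noteq> 0" using ne unfolding 2(2) slice_def by blast
    then have "q G + upsum U 1 p G \<noteq> 0" using slice_glue_a[OF 2(1)] by simp
    then have "card G + 1 = k"
      using bit_add_nonzero q upsum_chain_nonzeroD[OF p] k unfolding chains_on_def by fastforce
    then show ?thesis using 2 fin[OF 2(1)] by auto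
  next
    case (3 G)
    then have "slice b ?f G \<noteq> 0" using ne unfolding 3(2) slice_def by blast
    then have "r G + upsum U 1 p G \<noteq> 0" using slice_glue_b[OF 3(1)] by simp
    then have "card G + 1 = k"
      using bit_add_nonzero r upsum_chain_nonzeroD[OF p] k unfolding chains_on_def by fastforce
    then show ?thesis using 3 fin[OF 3(1)] by auto
  next
    case (4 G)
    then have "slice a (slice b ?f) G \<noteq> 0" using ne unfolding 4(2) slice_def by (metis insert_commute)
    then have "upsum U 2 p G + upsum U 1 q G + upsum U 1 r G \<noteq> 0"
      using slice_glue_ab[OF 4(1)] by simp
    then consider "upsum U 2 p G \<noteq> 0" | "upsum U 1 q G \<noteq> 0" | "upsum U 1 r G \<noteq> 0"
      using bit_add_nonzero by blast
    then have "card G + 2 = k"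
      by cases (use upsum_chain_nonzeroD[OF p] upsum_chain_nonzeroD[OF q]
          upsum_chain_nonzeroD[OF r] k in force)+
    then show ?thesis using 4 fin[OF 4(1)] ab by auto
  qed
qed

lemma upsum2_glue:
  assumes q: "upsum U 2 q = 0" and r: "upsum U 2 r = 0"
  shows "upsum (insert a (insert b U)) 2 (glue U a b p q r) = 0"
proof -
  let ?f = "glue U a b p q r"
  have "upsum U j ?f = upsum U j p" for j by (rule upsum_cong) (simp add: glue_subset)
  moreover have "upsum U j (slice a ?f) = upsum U j (q + upsum U 1 p)" for j
    by (rule upsum_cong) (simp add: slice_glue_a)
  moreover have "upsum U j (slice b ?f) = upsum U j (r + upsum U 1 p)" for j
    by (rule upsum_cong) (simp add: slice_glue_b)
  moreover have "upsum U j (slice a (slice b ?f)) = upsum U j (upsum U 2 p + upsum U 1 q + upsum U 1 r)" for j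
    by (rule upsum_cong) (simp add: slice_glue_ab)
  moreover have "upsum U 2 (upsum U (Suc 0) q) = 0" "upsum U 2 (upsum U (Suc 0) r) = 0"
    using upsum1_upsum2_commute[OF U, of q] upsum1_upsum2_commute[OF U, of r] q r by simp_all
  ultimately show ?thesis
    unfolding upsum2_eq_0_iff[OF U a b ab]
    by (simp add: upsum_add slice_glue_ab upsum1_upsum1[OF U] upsum1_upsum2_commute[OF U]
        upsum2_upsum2[OF U] q r ac_simps)
qed

lemma glue_in_cycles:
  assumes "k \<ge> 2" "p \<in> chains_on U k" "q \<in> cycles_on U (k - 1)" "r \<in> cycles_on U (k - 1)"
  shows "glue U a b p q r \<in> cycles_on (insert a (insert b U)) k"
  using assms glue_in_chains_on upsum2_glue unfolding cycles_on_def by blast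

lemma glue_split_chain:
  assumes f: "f \<in> cycles_on (insert a (insert b U)) k"
  shows "(\<lambda>(p, q, r). glue U a b p q r) (split_chain U a b f) = f"
proof -
  let ?p = "restrict_subsets U f"
    and ?q = "restrict_subsets U (slice a f) + upsum U 1 f"
    and ?r = "restrict_subsets U (slice b f) + upsum U 1 f"
  have chain: "f S \<noteq> 0 \<Longrightarrow> S \<subseteq> insert a (insert b U)" for S
    using f unfolding cycles_on_def chains_on_def by auto
  have "glue U a b ?p ?q ?r X = f X" for X
  proof (cases "X \<subseteq> insert a (insert b U)")
    case True
    then show ?thesis
    proof (cases rule: subset_insert_insert_cases)
      case (1 G) then show ?thesis by (simp add: glue_subset restrict_subsets_def)
    next
      case (2 G)
      have "slice a (glue U a b ?p ?q ?r) G = slice a f G"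
        using slice_glue_a[OF 2(1)] 2(1) by (simp add: restrict_subsets_def upsum_add)
      then show ?thesis using 2(2) by (simp add: slice_def)
    next
      case (3 G)
      have "slice b (glue U a b ?p ?q ?r) G = slice b f G"
        using slice_glue_b[OF 3(1)] 3(1) by (simp add: restrict_subsets_def upsum_add)
      then show ?thesis using 3(2) by (simp add: slice_def)
    next
      case (4 G)
      have "slice a (slice b (glue U a b ?p ?q ?r)) G = slice a (slice b f) G"
        using slice_glue_ab[OF 4(1)] cycles_on_slices(1)[OF U a b ab f 4(1)]
        by (simp add: upsum_add upsum1_upsum1[OF U] ac_simps)
      then show ?thesis using 4(2) unfolding slice_def by (metis insert_commute)
    qed
  qed (use glue_outside chain in fastforce)
  then show ?thesis by (simp add: split_chain_def fun_eq_iff)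
qed

lemma split_chain_glue:
  assumes p: "p \<in> chains_on U k" and q: "q \<in> cycles_on U (k - 1)" and r: "r \<in> cycles_on U (k - 1)"
  shows "split_chain U a b (glue U a b p q r) = (p, q, r)"
proof -
  have vanish: "g S = 0" if "g \<in> chains_on U j" "\<not> S \<subseteq> U" for g j S
    using that unfolding chains_on_def by blast
  have chains: "q \<in> chains_on U (k - 1)" "r \<in> chains_on U (k - 1)"
    using q r unfolding cycles_on_def by auto
  have upsum_glue: "upsum U j (glue U a b p q r) = upsum U j p" for j
    by (rule upsum_cong) (simp add: glue_subset)
  have "restrict_subsets U (glue U a b p q r) = p"
    using vanish[OF p] by (auto simp: fun_eq_iff restrict_subsets_def glue_subset)
  moreover have "restrict_subsets U (slice a (glue U a b p q r)) + upsum U 1 p = q"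
    using vanish[OF chains(1)]
    by (auto simp: fun_eq_iff restrict_subsets_def slice_glue_a upsum_not_subset add.assoc)
  moreover have "restrict_subsets U (slice b (glue U a b p q r)) + upsum U 1 p = r"
    using vanish[OF chains(2)]
    by (auto simp: fun_eq_iff restrict_subsets_def slice_glue_b upsum_not_subset add.assoc)
  ultimately show ?thesis unfolding split_chain_def upsum_glue by simp
qed

lemma card_cycles_insert_insert:
  assumes k: "k \<ge> 2"
  shows "card (cycles_on (insert a (insert b U)) k) = card (chains_on U k) * card (cycles_on U (k - 1)) ^ 2"
proof -
  have "bij_betw (split_chain U a b) (cycles_on (insert a (insert b U)) k)
      (chains_on U k \<times> cycles_on U (k - 1) \<times> cycles_on U (k - 1))"
  proof (rule bij_betw_byWitness[where f'="\<lambda>(p, q, r). glue U a b p q r"])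
    show "split_chain U a b ` cycles_on (insert a (insert b U)) k
        \<subseteq> chains_on U k \<times> cycles_on U (k - 1) \<times> cycles_on U (k - 1)"
    proof (rule image_subsetI)
      fix f assume f: "f \<in> cycles_on (insert a (insert b U)) k"
      have "restrict_subsets U f \<in> chains_on U k"
        using f unfolding cycles_on_def chains_on_def restrict_subsets_def by auto
      moreover have "f \<in> cycles_on (insert b (insert a U)) k" using f by (simp add: insert_commute)
      ultimately show "split_chain U a b f \<in> chains_on U k \<times> cycles_on U (k - 1) \<times> cycles_on U (k - 1)"
        unfolding split_chain_def
        using slice_plus_upsum_in_cycles[OF U a b ab f] slice_plus_upsum_in_cycles[OF U b a ab[symmetric]]
        by auto
    qed
  qed (auto simp: glue_split_chain split_chain_glue glue_in_cycles[OF k])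
  then show ?thesis by (simp add: bij_betw_same_card card_cartesian_product power2_eq_square)
qed

end

lemma card_bit_functions_supported:
  assumes "finite A"
  shows "card {f :: 'a \<Rightarrow> bit. \<forall>x. x \<notin> A \<longrightarrow> f x = 0} = 2 ^ card A"
proof -
  have "bij_betw (\<lambda>f. restrict f A) {f :: 'a \<Rightarrow> bit. \<forall>x. x \<notin> A \<longrightarrow> f x = 0} (A \<rightarrow>\<^sub>E UNIV)"
    by (rule bij_betw_byWitness[where f'="\<lambda>g x. if x \<in> A then g x else 0"])
      (auto simp: fun_eq_iff PiE_def extensional_def)
  moreover have "(UNIV :: bit set) = {0, 1}" by (auto intro: bit.exhaust)
  then have "card (UNIV :: bit set) = 2" by (metis card_2_iff zero_neq_one)
  ultimately show ?thesis using assms by (simp add: bij_betw_same_card card_PiE)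
qed

lemma card_chains_on:
  assumes "finite U"
  shows "card (chains_on U k) = 2 ^ (card U choose k)"
proof -
  have fin: "finite {S. S \<subseteq> U \<and> card S = k}"
    by (rule finite_subset[of _ "Pow U"]) (use assms in auto)
  have "chains_on U k = {f :: 'a set \<Rightarrow> bit. \<forall>S. S \<notin> {S. S \<subseteq> U \<and> card S = k} \<longrightarrow> f S = 0}"
    unfolding chains_on_def by fastforce
  then show ?thesis using card_bit_functions_supported[OF fin] n_subsets[OF assms] by simp
qed

lemma finite_cycles_on: "finite U \<Longrightarrow> finite (cycles_on U k)"
  by (rule finite_subset[of _ "chains_on U k"]) (auto simp: cycles_on_def card_chains_on intro: card_ge_0_finite)

interpretation Z2: vector_space scaleZ2
  by unfold_locales (auto simp: scaleZ2_def fun_eq_iff algebra_simps)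

lemma scaleZ2_cases: "scaleZ2 c f = (if c = 0 then 0 else f)"
  by (cases c) (auto simp: scaleZ2_def fun_eq_iff)

lemma Z2_subspace_cycles_on: "Z2.subspace (cycles_on U k)"
  unfolding Z2.subspace_def
proof (intro conjI ballI allI)
  fix f g assume fg: "f \<in> cycles_on U k" "g \<in> cycles_on U k"
  then have "(f + g) S \<noteq> 0 \<Longrightarrow> S \<subseteq> U \<and> card S = k" for S
    using bit_add_nonzero[of "f S" "g S"] unfolding cycles_on_def chains_on_def by auto
  then show "f + g \<in> cycles_on U k"
    using fg unfolding cycles_on_def chains_on_def by (auto simp: upsum_add)
qed (auto simp: cycles_on_def chains_on_def scaleZ2_cases)

text \<open>Over Z_2, adjoining an independent vector b doubles the span: it adds the translate
  of the old span by b.\<close>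
lemma Z2_card_span_independent:
  assumes "finite B" "Z2.independent B"
  shows "card (Z2.span B) = 2 ^ card B"
  using assms
proof (induction B rule: finite_induct)
  case (insert b B)
  have "Z2.independent B" and b: "b \<notin> Z2.span B"
    using insert.prems insert.hyps Z2.independent_insert by auto
  then have card: "card (Z2.span B) = 2 ^ card B" using insert.IH by simp
  have span: "Z2.span (insert b B) = Z2.span B \<union> (\<lambda>y. y + b) ` Z2.span B"
  proof -
    have "x - b \<in> Z2.span B \<longleftrightarrow> x \<in> (\<lambda>y. y + b) ` Z2.span B" for x
      by (auto intro: image_eqI[of _ _ "x - b"])
    then show ?thesis
      unfolding Z2.span_insert by (auto simp: scaleZ2_cases intro: exI[of _ 0] exI[of _ 1])
  qed
  have "Z2.span B \<inter> (\<lambda>y. y + b) ` Z2.span B = {}"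
    using b Z2.span_diff by fastforce
  moreover have "finite (Z2.span B)" using card by (metis card.infinite power_not_zero zero_neq_numeral)
  ultimately have "card (Z2.span (insert b B)) = card (Z2.span B) + card ((\<lambda>y. y + b) ` Z2.span B)"
    unfolding span by (intro card_Un_disjoint) auto
  also have "card ((\<lambda>y. y + b) ` Z2.span B) = card (Z2.span B)" by (rule card_image) (rule inj_onI, simp)
  finally show ?case using card insert.hyps by simp
qed simp

lemma Z2_card_subspace:
  assumes "Z2.subspace V" "finite V"
  shows "card V = 2 ^ Z2.dim V"
proof -
  obtain B where B: "B \<subseteq> V" "Z2.independent B" "V \<subseteq> Z2.span B" "card B = Z2.dim V"
    by (rule Z2.basis_exists)
  then have "Z2.span B = V" using Z2.span_minimal[OF B(1) assms(1)] by auto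
  then show ?thesis using Z2_card_span_independent[of B] B finite_subset[OF B(1) assms(2)] by simp
qed

lemma sum_fun_apply: "(\<Sum>x\<in>A. g x) y = (\<Sum>x\<in>A. g x y)"
  by (induction A rule: infinite_finite_induct) auto

lemma bd_basis_apply:
  assumes "k \<ge> 2" "finite D"
  shows "bd_basis k D G = (if G \<subseteq> D \<and> card G = k - 2 then 1 else 0)"
proof -
  have "finite {G. G \<subseteq> D \<and> card G = k - 2}"
    by (rule finite_subset[of _ "Pow D"]) (use assms in auto)
  then show ?thesis
    using assms by (simp add: bd_basis_def sum_fun_apply basis_el_def sum.delta)
qed

lemma bd_eq_upsum:
  assumes k: "k \<ge> 2" and f: "f \<in> chains_on {1..2*m} k"
  shows "bd m k f = upsum {1..2*m} 2 f"
proof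
  fix G
  have fin: "finite (ksubsets m k)"
    unfolding ksubsets_def by (rule finite_subset[of _ "Pow {1..2*m}"]) auto
  have "bd m k f G = (\<Sum>D\<in>ksubsets m k. if G \<subseteq> D \<and> card G = k - 2 then f D else 0)"
    unfolding bd_def sum_fun_apply scaleZ2_def
  proof (rule sum.cong[OF refl])
    fix D assume "D \<in> ksubsets m k"
    then have "finite D" unfolding ksubsets_def using finite_subset by blast
    then show "f D * bd_basis k D G = (if G \<subseteq> D \<and> card G = k - 2 then f D else 0)"
      by (simp add: bd_basis_apply[OF k])
  qed
  also have "\<dots> = upsum {1..2*m} 2 f G"
  proof (cases "card G + 2 = k")
    case True
    have "(\<Sum>D\<in>ksubsets m k. if G \<subseteq> D \<and> card G = k - 2 then f D else 0)
        = (\<Sum>D\<in>ksubsets m k. if G \<subseteq> D then f D else 0)"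
      using True by (intro sum.cong) auto
    also have "\<dots> = sum f {D \<in> ksubsets m k. G \<subseteq> D}" by (rule sum.inter_filter[OF fin, symmetric])
    also have "{D \<in> ksubsets m k. G \<subseteq> D} = supersets {1..2*m} 2 G"
      unfolding ksubsets_def supersets_def using True by auto
    finally show ?thesis unfolding upsum_def .
  next
    case False
    then have "upsum {1..2*m} 2 f G = 0" using upsum_chain_nonzeroD[OF f, of "{1..2*m}" 2 G] by blast
    moreover have "card G \<noteq> k - 2" using False k by arith
    ultimately show ?thesis by simp
  qed
  finally show "bd m k f G = upsum {1..2*m} 2 f G" .
qed

lemma ker_bd_eq_cycles_on: "k \<ge> 2 \<Longrightarrow> ker_bd m k = cycles_on {1..2*m} k"
proof -
  assume k: "k \<ge> 2"
  have "chains m k = chains_on {1..2*m} k"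
    unfolding chains_def chains_on_def ksubsets_def by auto
  then show ?thesis
    unfolding ker_bd_def cycles_on_def using bd_eq_upsum[OF k] by auto
qed

fun cycle_rank :: "nat \<Rightarrow> nat" where
  "cycle_rank 0 = 0"
| "cycle_rank (Suc n) = (2*n choose (n+2)) + 2 * cycle_rank n"

lemma card_middle_cycles: "card (cycles_on {1..2*n} (n+1)) = 2 ^ cycle_rank n"
proof (induction n)
  case 0
  have "f S = 0" if "f \<in> chains_on {} 1" for f :: "nat set \<Rightarrow> bit" and S
  proof (rule ccontr)
    assume "f S \<noteq> 0"
    then have "S \<subseteq> {} \<and> card S = 1" using that unfolding chains_on_def by blast
    then show False by auto
  qed
  then have "cycles_on {} 1 = {0 :: nat set \<Rightarrow> bit}"
    unfolding cycles_on_def by (auto simp: chains_on_def)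
  then show ?case by simp
next
  case (Suc n)
  let ?U = "{1..2*n}"
  have "card (cycles_on (insert (2*n+1) (insert (2*n+2) ?U)) (n+2))
      = card (chains_on ?U (n+2)) * card (cycles_on ?U (n + 2 - 1)) ^ 2"
    by (rule card_cycles_insert_insert) auto
  moreover have "{1..2 * Suc n} = insert (2*n+1) (insert (2*n+2) ?U)" by auto
  ultimately have "card (cycles_on {1..2 * Suc n} (Suc n + 1))
      = 2 ^ (2*n choose (n+2)) * (2 ^ cycle_rank n) ^ 2"
    using Suc.IH card_chains_on[of ?U "n+2"] by simp
  also have "\<dots> = 2 ^ cycle_rank (Suc n)" by (simp add: power_add power_even_eq)
  finally show ?case .
qed

lemma dim_middle_cycles: "Z2.dim (cycles_on {1..2*n} (n+1)) = cycle_rank n"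
  using Z2_card_subspace[OF Z2_subspace_cycles_on finite_cycles_on] card_middle_cycles by simp

lemma cycle_rank_closed_form:
  "cycle_rank (Suc n) + (\<Sum>i = 0..n. 2 ^ (n - i) * (2*i choose i)) = 2 * Suc n choose (Suc n + 1)"
proof (induction n)
  case 0 then show ?case by (simp add: numeral_2_eq_2)
next
  case (Suc n)
  have "(\<Sum>i = 0..Suc n. 2 ^ (Suc n - i) * (2*i choose i))
      = 2 * (\<Sum>i = 0..n. 2 ^ (n - i) * (2*i choose i)) + (2 * Suc n choose Suc n)"
  proof -
    have "(\<Sum>i = 0..n. 2 ^ (Suc n - i) * (2*i choose i)) = (\<Sum>i = 0..n. 2 * (2 ^ (n - i) * (2*i choose i)))"
      by (rule sum.cong) (auto simp: Suc_diff_le)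
    then show ?thesis by (simp add: sum_distrib_left)
  qed
  moreover have "2 * Suc (Suc n) choose (Suc (Suc n) + 1)
      = (2 * Suc n choose (Suc n + 2)) + 2 * (2 * Suc n choose (Suc n + 1)) + (2 * Suc n choose Suc n)"
  proof -
    have "2 * Suc (Suc n) = Suc (Suc (2 * Suc n))" "Suc (Suc n) + 1 = Suc (Suc (Suc n))" by simp_all
    then show ?thesis by (simp only: binomial_Suc_Suc) simp
  qed
  ultimately show ?case using Suc.IH by simp
qed

theorem mainTheorem7:
  fixes m :: nat
  assumes "m \<ge> 1"
  shows "int (vector_space.dim scaleZ2 (ker_bd m (m + 1))) =
    int ((2*m) choose (m - 1)) - (\<Sum>i = 0..m-1. 2 ^ (m - 1 - i) * int ((2*i) choose i))"
proof -
  obtain n where m: "m = Suc n" using assms by (cases m) auto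
  have "Z2.dim (ker_bd m (m + 1)) = cycle_rank m"
    using ker_bd_eq_cycles_on[of "m + 1" m] dim_middle_cycles[of m] m by simp
  moreover have "2*m choose (m - 1) = 2*m choose (m + 1)"
    using binomial_symmetric[of "m + 1" "2*m"] m by simp
  moreover have "(\<Sum>i = 0..m-1. 2 ^ (m - 1 - i) * int (2*i choose i))
      = int (\<Sum>i = 0..n. 2 ^ (n - i) * (2*i choose i))"
    using m by (simp add: of_nat_sum)
  ultimately show ?thesis
    using arg_cong[OF cycle_rank_closed_form[of n], of int] m by simp
qed

end
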